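(* Let $C>0$, $C'>0$ and $n\geq\mathrm{e}^{C/8}M\log M$, and draw the entries of an $M\times n$ matrix $\Phi=\{\varphi_i\}_{i=1}^n$ independently from $\mathbb{C}\mathcal{N}(0,\frac1M)$. Given $x\in\mathbb{C}^M\setminus\{0\}$, consider $z_i:=|\langle x,\varphi_i\rangle|^2+\nu_i$, $i=1,\dots,n$, where the real noise vector $\nu=\{\nu_i\}_{i=1}^n$ satisfies $\frac{\|\nu\|}{\|x\|^2}\leq\frac{C'}{\sqrt{M}}$. Let $\beta:=3\mathrm{e}^{-C/8}$. Then with overwhelming probability, \[ \#\Big\{i:\ z_i>\frac{2C}{M}\|x\|^2\Big\}<2\beta n . \]
   Context: $\mathbb{C}\mathcal{N}(0,\sigma^2)$ is the complex Gaussian with independent $\mathcal{N}(0,\sigma^2/2)$ real and imaginary parts. "With overwhelming probability" means with probability tending to $1$ exponentially fast as $M\to\infty$ (probability at least $1-c_0\mathrm{e}^{-c_1M}$ for constants $c_0,c_1>0$), for $M$ sufficiently large. *)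

theory Defs
  imports "HOL-Probability.Probability"
begin

text \<open>Complex Gaussian CN(0, s2): independent real and imaginary parts, each N(0, s2/2).
  normal_density mu sigma uses sigma as standard deviation.\<close>
definition cgauss :: "real \<Rightarrow> complex measure" where
  "cgauss s2 = distr
     (density lborel (normal_density 0 (sqrt (s2 / 2))) \<Otimes>\<^sub>M
      density lborel (normal_density 0 (sqrt (s2 / 2))))
     borel (\<lambda>(a, b). Complex a b)"

text \<open>Random M x n matrix with i.i.d. CN(0,1/M) entries; entry (j,i) is row j, column i.\<close>
definition gauss_matrix :: "nat \<Rightarrow> nat \<Rightarrow> (nat \<times> nat \<Rightarrow> complex) measure" where
  "gauss_matrix M n = PiM ({..<M} \<times> {..<n}) (\<lambda>_. cgauss (1 / real M))"

definition cinner :: "nat \<Rightarrow> (nat \<Rightarrow> complex) \<Rightarrow> (nat \<Rightarrow> complex) \<Rightarrow> complex" where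
  "cinner M x y = (\<Sum>j<M. x j * cnj (y j))"

definition cvnorm :: "nat \<Rightarrow> (nat \<Rightarrow> complex) \<Rightarrow> real" where
  "cvnorm M x = sqrt (\<Sum>j<M. (cmod (x j))\<^sup>2)"

definition rvnorm :: "nat \<Rightarrow> (nat \<Rightarrow> real) \<Rightarrow> real" where
  "rvnorm n v = sqrt (\<Sum>i<n. (v i)\<^sup>2)"

end

theory Submission
  imports Defs
begin

text \<open>
  Let \<open>T = C \<parallel>x\<parallel>\<^sup>2 / M\<close>. An index with \<open>|\<langle>x,\<phi>\<^sub>i\<rangle>|\<^sup>2 + \<nu>\<^sub>i > 2 T\<close> has \<open>|\<langle>x,\<phi>\<^sub>i\<rangle>|\<^sup>2 > T\<close> or \<open>\<nu>\<^sub>i > T\<close>.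
  Since \<open>#{i. \<nu>\<^sub>i > T} T\<^sup>2 \<le> \<parallel>\<nu>\<parallel>\<^sup>2\<close>, the noise bound leaves at most \<open>(C'/C)\<^sup>2 M \<le> exp (-C/8) n\<close>
  indices of the second kind once \<open>ln M \<ge> (C'/C)\<^sup>2\<close>. Each \<open>\<langle>x,\<phi>\<^sub>i\<rangle>\<close> is complex Gaussian of
  variance \<open>\<parallel>x\<parallel>\<^sup>2 / M\<close>, so Chernoff bounds for \<open>\<plusminus>Re\<close> and \<open>\<plusminus>Im\<close> give
  \<open>P (|\<langle>x,\<phi>\<^sub>i\<rangle>|\<^sup>2 > T) \<le> 4 exp (-C/2) \<le> 4 exp (-C/8)\<close>. The columns are independent, so by
  Hoeffding's inequality more than \<open>5 exp (-C/8) n\<close> indices of the first kind occur with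
  probability at most \<open>exp (-2 exp (-C/4) n) \<le> exp (-2 exp (-C/8) M)\<close>.
\<close>

lemma nn_integral_exp_normal_density:
  fixes \<sigma> t :: real
  assumes "\<sigma> > 0"
  shows "(\<integral>\<^sup>+u. exp (t * u) \<partial>density lborel (normal_density 0 \<sigma>)) = exp (t\<^sup>2 * \<sigma>\<^sup>2 / 2)"
proof -
  have shift: "normal_density 0 \<sigma> u * exp (t * u) = exp (t\<^sup>2 * \<sigma>\<^sup>2 / 2) * normal_density (t * \<sigma>\<^sup>2) \<sigma> u" for u
  proof -
    have "- (u - 0)\<^sup>2 / (2 * \<sigma>\<^sup>2) + t * u = t\<^sup>2 * \<sigma>\<^sup>2 / 2 + - (u - t * \<sigma>\<^sup>2)\<^sup>2 / (2 * \<sigma>\<^sup>2)"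
      using assms by (simp add: field_simps power2_eq_square)
    then show ?thesis
      unfolding normal_density_def by (simp add: exp_add[symmetric] mult_ac)
  qed
  have "(\<integral>\<^sup>+u. exp (t * u) \<partial>density lborel (normal_density 0 \<sigma>))
      = (\<integral>\<^sup>+u. exp (t\<^sup>2 * \<sigma>\<^sup>2 / 2) * ennreal (normal_density (t * \<sigma>\<^sup>2) \<sigma> u) \<partial>lborel)"
    by (subst nn_integral_density) (auto intro!: nn_integral_cong simp: shift ennreal_mult[symmetric])
  also have "\<dots> = exp (t\<^sup>2 * \<sigma>\<^sup>2 / 2) * (\<integral>\<^sup>+u. normal_density (t * \<sigma>\<^sup>2) \<sigma> u \<partial>lborel)"
    by (rule nn_integral_cmult) auto
  also have "(\<integral>\<^sup>+u. normal_density (t * \<sigma>\<^sup>2) \<sigma> u \<partial>lborel) = 1"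
    using integrable_normal_density[OF assms] integral_normal_density[OF assms]
    by (subst nn_integral_eq_integral) auto
  finally show ?thesis by simp
qed

lemma measurable_case_prod_Complex [measurable]:
  "(\<lambda>(a, b). Complex a b) \<in> borel_measurable (borel \<Otimes>\<^sub>M borel)"
proof -
  have "(\<lambda>(a, b). Complex a b) = (\<lambda>p. complex_of_real (fst p) + \<i> * complex_of_real (snd p))"
    by (auto simp: fun_eq_iff complex_eq_iff)
  then show ?thesis by simp
qed

lemma borel_measurable_cnj [measurable]: "cnj \<in> borel_measurable borel"
  by (intro borel_measurable_continuous_onI continuous_on_cnj continuous_on_id)

lemma sets_cgauss [measurable_cong]: "sets (cgauss s) = sets borel"
  by (simp add: cgauss_def)

lemma prob_space_cgauss:
  assumes "s > 0"
  shows "prob_space (cgauss s)"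
proof -
  let ?N = "density lborel (normal_density 0 (sqrt (s / 2)))"
  interpret N: prob_space ?N by (rule prob_space_normal_density) (use assms in simp)
  interpret P: pair_prob_space ?N ?N ..
  show ?thesis
    unfolding cgauss_def by (rule P.prob_space_distr) simp
qed

lemma nn_integral_exp_Re_mult_cnj_cgauss:
  assumes "s > 0"
  shows "(\<integral>\<^sup>+z. exp (Re (c * cnj z)) \<partial>cgauss s) = exp ((cmod c)\<^sup>2 * s / 4)"
proof -
  let ?N = "density lborel (normal_density 0 (sqrt (s / 2)))"
  interpret N: prob_space ?N by (rule prob_space_normal_density) (use assms in simp)
  have \<sigma>: "sqrt (s / 2) > 0" "(sqrt (s / 2))\<^sup>2 = s / 2" using assms by auto
  have "(\<integral>\<^sup>+z. exp (Re (c * cnj z)) \<partial>cgauss s)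
      = (\<integral>\<^sup>+p. ennreal (exp (Re c * fst p)) * ennreal (exp (Im c * snd p)) \<partial>(?N \<Otimes>\<^sub>M ?N))"
    unfolding cgauss_def
    by (subst nn_integral_distr) (auto intro!: nn_integral_cong simp: exp_add ennreal_mult)
  also have "\<dots> = (\<integral>\<^sup>+a. ennreal (exp (Re c * a)) * \<integral>\<^sup>+b. ennreal (exp (Im c * b)) \<partial>?N \<partial>?N)"
    by (subst N.nn_integral_fst[symmetric]) (auto intro!: nn_integral_cong simp: nn_integral_cmult)
  also have "\<dots> = exp ((Re c)\<^sup>2 * (s / 2) / 2) * exp ((Im c)\<^sup>2 * (s / 2) / 2)"
    by (simp add: nn_integral_exp_normal_density[OF \<sigma>(1)] nn_integral_multc \<sigma>(2) ennreal_mult)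
  also have "\<dots> = exp ((cmod c)\<^sup>2 * s / 4)"
  proof -
    have "(Re c)\<^sup>2 * (s / 2) / 2 + (Im c)\<^sup>2 * (s / 2) / 2 = (cmod c)\<^sup>2 * s / 4"
      by (simp add: cmod_power2 field_simps)
    then show ?thesis by (simp flip: exp_add)
  qed
  finally show ?thesis .
qed

lemma measurable_linear_PiM_cgauss [measurable]:
  assumes "F \<subseteq> K"
  shows "(\<lambda>\<Phi>. \<Sum>k\<in>F. c k * cnj (\<Phi> k)) \<in> borel_measurable (PiM K (\<lambda>_. cgauss s))"
proof -
  have [measurable]: "(\<lambda>\<Phi>. \<Phi> k) \<in> borel_measurable (PiM K (\<lambda>_. cgauss s))" if "k \<in> F" for k
    using measurable_component_singleton[of k K "\<lambda>_. cgauss s"] that assms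
      measurable_cong_sets[OF refl sets_cgauss]
    by blast
  show ?thesis by measurable
qed

lemma nn_integral_exp_Re_linear_PiM_cgauss:
  assumes "s > 0" "finite K" "F \<subseteq> K"
  shows "(\<integral>\<^sup>+\<Phi>. exp (Re (\<Sum>k\<in>F. c k * cnj (\<Phi> k))) \<partial>PiM K (\<lambda>_. cgauss s))
       = exp (s / 4 * (\<Sum>k\<in>F. (cmod (c k))\<^sup>2))"
proof -
  interpret C: prob_space "cgauss s" by (rule prob_space_cgauss) fact
  interpret PS: product_prob_space "\<lambda>_. cgauss s" ..
  have "finite F" using assms(2,3) by (rule finite_subset[rotated])
  define f where "f = (\<lambda>k z. if k \<in> F then ennreal (exp (Re (c k * cnj z))) else 1)"
  have factor: "ennreal (exp (Re (\<Sum>k\<in>F. c k * cnj (\<Phi> k)))) = (\<Prod>k\<in>K. f k (\<Phi> k))" for \<Phi>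
  proof -
    have "(\<Prod>k\<in>K. f k (\<Phi> k)) = (\<Prod>k\<in>F. ennreal (exp (Re (c k * cnj (\<Phi> k)))))"
      using assms(2,3) by (simp add: f_def prod.If_cases Int_absorb1)
    then show ?thesis
      using \<open>finite F\<close> by (simp add: Re_sum exp_sum prod_ennreal)
  qed
  have "(\<integral>\<^sup>+\<Phi>. exp (Re (\<Sum>k\<in>F. c k * cnj (\<Phi> k))) \<partial>PiM K (\<lambda>_. cgauss s))
      = (\<Prod>k\<in>K. integral\<^sup>N (cgauss s) (f k))"
    unfolding factor by (rule PS.product_nn_integral_prod) (auto simp: f_def assms(2))
  also have "\<dots> = (\<Prod>k\<in>F. ennreal (exp (s / 4 * (cmod (c k))\<^sup>2)))"
  proof -
    have "integral\<^sup>N (cgauss s) (f k) = (if k \<in> F then ennreal (exp (s / 4 * (cmod (c k))\<^sup>2)) else 1)" for k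
      using nn_integral_exp_Re_mult_cnj_cgauss[OF assms(1), of "c k"]
      by (simp add: f_def C.emeasure_space_1 mult.commute)
    then show ?thesis
      using assms(2,3) by (simp add: prod.If_cases Int_absorb1)
  qed
  also have "\<dots> = exp (s / 4 * (\<Sum>k\<in>F. (cmod (c k))\<^sup>2))"
    using \<open>finite F\<close> by (simp add: prod_ennreal exp_sum sum_distrib_left)
  finally show ?thesis .
qed

lemma prob_Re_linear_PiM_cgauss_ge:
  assumes "s > 0" "finite K" "F \<subseteq> K" "r > 0" "(\<Sum>k\<in>F. (cmod (c k))\<^sup>2) > 0"
  shows "measure (PiM K (\<lambda>_. cgauss s))
           {\<Phi> \<in> space (PiM K (\<lambda>_. cgauss s)). r \<le> Re (\<Sum>k\<in>F. c k * cnj (\<Phi> k))}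
         \<le> exp (- r\<^sup>2 / (s * (\<Sum>k\<in>F. (cmod (c k))\<^sup>2)))"
proof -
  let ?P = "PiM K (\<lambda>_. cgauss s)" and ?Q = "\<Sum>k\<in>F. (cmod (c k))\<^sup>2"
  interpret C: prob_space "cgauss s" by (rule prob_space_cgauss) fact
  interpret P: prob_space ?P by (rule prob_space_PiM) (rule C.prob_space_axioms)
  have [measurable]: "(\<lambda>\<Phi>. \<Sum>k\<in>F. c k * cnj (\<Phi> k)) \<in> borel_measurable ?P"
    using assms(3) by (rule measurable_linear_PiM_cgauss)
  \<comment> \<open>the minimiser of \<open>- l * r + s / 4 * l\<^sup>2 * ?Q\<close>\<close>
  define l where "l = 2 * r / (s * ?Q)"
  have l: "l > 0" using assms by (simp add: l_def)
  have "emeasure ?P {\<Phi> \<in> space ?P. r \<le> Re (\<Sum>k\<in>F. c k * cnj (\<Phi> k))}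
      \<le> ennreal (exp (- l * r)) * (\<integral>\<^sup>+\<Phi>. ennreal (exp (l * Re (\<Sum>k\<in>F. c k * cnj (\<Phi> k)))) * indicator (space ?P) \<Phi> \<partial>?P)"
    by (rule Chernoff_ineq_nn_integral_ge[OF l]; measurable)
  also have "(\<integral>\<^sup>+\<Phi>. ennreal (exp (l * Re (\<Sum>k\<in>F. c k * cnj (\<Phi> k)))) * indicator (space ?P) \<Phi> \<partial>?P)
      = (\<integral>\<^sup>+\<Phi>. exp (Re (\<Sum>k\<in>F. (l * c k) * cnj (\<Phi> k))) \<partial>?P)"
    by (intro nn_integral_cong) (simp add: sum_distrib_left mult.assoc Re_sum)
  also have "\<dots> = exp (s / 4 * (l\<^sup>2 * ?Q))"
    using nn_integral_exp_Re_linear_PiM_cgauss[OF assms(1-3), of "\<lambda>k. l * c k"] l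
    by (simp add: norm_mult power_mult_distrib sum_distrib_left)
  also have "ennreal (exp (- l * r)) * exp (s / 4 * (l\<^sup>2 * ?Q)) = exp (- r\<^sup>2 / (s * ?Q))"
  proof -
    have "- l * r + s / 4 * (l\<^sup>2 * ?Q) = - r\<^sup>2 / (s * ?Q)"
      using assms by (simp add: l_def field_simps power2_eq_square)
    then show ?thesis by (simp flip: ennreal_mult exp_add)
  qed
  finally show ?thesis by (simp add: P.emeasure_eq_measure)
qed

lemma ex_Re_i_power_mult_ge:
  fixes w :: complex
  assumes "2 * r\<^sup>2 < (cmod w)\<^sup>2" "r \<ge> 0"
  shows "\<exists>j<4::nat. r \<le> Re (\<i> ^ j * w)"
proof -
  have "r\<^sup>2 < (Re w)\<^sup>2 \<or> r\<^sup>2 < (Im w)\<^sup>2"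
    using assms(1) unfolding cmod_power2 by linarith
  then have "r < \<bar>Re w\<bar> \<or> r < \<bar>Im w\<bar>"
    by (metis abs_ge_zero power2_abs power2_less_imp_less)
  then have "r \<le> Re w \<or> r \<le> - Im w \<or> r \<le> - Re w \<or> r \<le> Im w"
    by linarith
  then show ?thesis
    by (simp add: numeral_eq_Suc Ex_less_Suc disj_commute disj_left_commute)
qed

lemma prob_cmod_linear_PiM_cgauss_gt:
  assumes "s > 0" "finite K" "F \<subseteq> K" "T > 0" "(\<Sum>k\<in>F. (cmod (c k))\<^sup>2) > 0"
  shows "measure (PiM K (\<lambda>_. cgauss s))
           {\<Phi> \<in> space (PiM K (\<lambda>_. cgauss s)). T < (cmod (\<Sum>k\<in>F. c k * cnj (\<Phi> k)))\<^sup>2}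
         \<le> 4 * exp (- T / (2 * s * (\<Sum>k\<in>F. (cmod (c k))\<^sup>2)))"
proof -
  let ?P = "PiM K (\<lambda>_. cgauss s)"
  interpret C: prob_space "cgauss s" by (rule prob_space_cgauss) fact
  interpret P: prob_space ?P by (rule prob_space_PiM) (rule C.prob_space_axioms)
  define r where "r = sqrt (T / 2)"
  have r: "r > 0" "r\<^sup>2 = T / 2" using assms(4) by (auto simp: r_def)
  define E where "E j = {\<Phi> \<in> space ?P. r \<le> Re (\<Sum>k\<in>F. (\<i> ^ j * c k) * cnj (\<Phi> k))}" for j :: nat
  have E: "E j \<in> P.events" for j
    using measurable_linear_PiM_cgauss[OF assms(3), of "\<lambda>k. \<i> ^ j * c k" s]
    unfolding E_def by measurable
  have "{\<Phi> \<in> space ?P. T < (cmod (\<Sum>k\<in>F. c k * cnj (\<Phi> k)))\<^sup>2} \<subseteq> (\<Union>j<4. E j)"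
  proof
    fix \<Phi> assume \<Phi>: "\<Phi> \<in> {\<Phi> \<in> space ?P. T < (cmod (\<Sum>k\<in>F. c k * cnj (\<Phi> k)))\<^sup>2}"
    then have "2 * r\<^sup>2 < (cmod (\<Sum>k\<in>F. c k * cnj (\<Phi> k)))\<^sup>2" using r by simp
    then obtain j where "j < 4" "r \<le> Re (\<i> ^ j * (\<Sum>k\<in>F. c k * cnj (\<Phi> k)))"
      using ex_Re_i_power_mult_ge r(1) by (meson less_imp_le)
    moreover have "\<i> ^ j * (\<Sum>k\<in>F. c k * cnj (\<Phi> k)) = (\<Sum>k\<in>F. (\<i> ^ j * c k) * cnj (\<Phi> k))"
      by (simp add: sum_distrib_left mult.assoc)
    ultimately show "\<Phi> \<in> (\<Union>j<4. E j)"
      using \<Phi> unfolding E_def by auto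
  qed
  then have "measure ?P {\<Phi> \<in> space ?P. T < (cmod (\<Sum>k\<in>F. c k * cnj (\<Phi> k)))\<^sup>2}
      \<le> measure ?P (\<Union>j<4. E j)"
    using E by (intro P.finite_measure_mono) auto
  also have "\<dots> \<le> (\<Sum>j<4. measure ?P (E j))"
    using E by (intro P.finite_measure_subadditive_finite) auto
  also have "\<dots> \<le> (\<Sum>j<4::nat. exp (- r\<^sup>2 / (s * (\<Sum>k\<in>F. (cmod (c k))\<^sup>2))))"
    using prob_Re_linear_PiM_cgauss_ge[OF assms(1-3) r(1), of "\<lambda>k. \<i> ^ j * c k" for j] assms(5)
    by (intro sum_mono) (simp add: E_def norm_mult norm_power)
  also have "\<dots> = 4 * exp (- T / (2 * s * (\<Sum>k\<in>F. (cmod (c k))\<^sup>2)))"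
    by (simp add: r(2))
  finally show ?thesis .
qed

lemma indep_vars_PiM_components:
  assumes "\<And>i. i \<in> I \<Longrightarrow> prob_space (N i)" "I \<noteq> {}"
  shows "prob_space.indep_vars (PiM I N) N (\<lambda>i x. x i) I"
proof -
  interpret P: prob_space "PiM I N" by (rule prob_space_PiM) (rule assms(1))
  have "distr (PiM I N) (PiM I N) (\<lambda>x. \<lambda>i\<in>I. x i) = distr (PiM I N) (PiM I N) (\<lambda>x. x)"
    by (rule distr_cong) (auto simp: space_PiM)
  also have "\<dots> = PiM I N" by (rule distr_id)
  also have "\<dots> = (\<Pi>\<^sub>M i\<in>I. distr (PiM I N) (N i) (\<lambda>x. x i))"
    by (rule PiM_cong) (auto simp: distr_PiM_component assms(1))
  finally show ?thesis
    by (subst P.indep_vars_iff_distr_eq_PiM'[OF assms(2) measurable_component_singleton]) auto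
qed

lemma prob_card_block_events_ge:
  fixes N :: "'k \<Rightarrow> 'a measure" and B :: "'i \<Rightarrow> 'k set" and G :: "'i \<Rightarrow> ('k \<Rightarrow> 'a) \<Rightarrow> bool"
  assumes N: "\<And>k. k \<in> K \<Longrightarrow> prob_space (N k)" "K \<noteq> {}"
    and I: "finite I" "I \<noteq> {}"
    and B: "disjoint_family_on B I" "\<And>i. i \<in> I \<Longrightarrow> B i \<subseteq> K"
    and G: "\<And>i. i \<in> I \<Longrightarrow> {\<psi> \<in> space (PiM (B i) N). G i \<psi>} \<in> sets (PiM (B i) N)"
    and p: "\<And>i. i \<in> I \<Longrightarrow>
              measure (PiM K N) {\<Phi> \<in> space (PiM K N). G i (restrict \<Phi> (B i))} \<le> p"
    and \<epsilon>: "\<epsilon> \<ge> 0"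
  shows "measure (PiM K N) {\<Phi> \<in> space (PiM K N).
           real (card I) * p + \<epsilon> \<le> real (card {i \<in> I. G i (restrict \<Phi> (B i))})}
         \<le> exp (- 2 * \<epsilon>\<^sup>2 / real (card I))"
proof -
  let ?P = "PiM K N"
  interpret P: prob_space ?P by (rule prob_space_PiM) (rule N(1))
  define X where "X i \<Phi> = (of_bool (G i (restrict \<Phi> (B i))) :: real)" for i \<Phi>
  have "P.indep_vars (\<lambda>i. PiM (B i) N) (\<lambda>i \<Phi>. restrict \<Phi> (B i)) I"
    using P.indep_vars_restrict[OF indep_vars_PiM_components[OF N] B(2,1)] by simp
  moreover have "(\<lambda>\<psi>. of_bool (G i \<psi>) :: real) \<in> borel_measurable (PiM (B i) N)" if "i \<in> I" for i
    using G[OF that] by (simp add: of_bool_def)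
  ultimately have indep: "P.indep_vars (\<lambda>_. borel) X I"
    unfolding X_def by (rule P.indep_vars_compose2)
  have E: "P.expectation (X i) \<le> p" if "i \<in> I" for i
  proof -
    have [measurable]: "X i \<in> borel_measurable ?P"
      using indep that by (simp add: P.indep_vars_def)
    have "{\<Phi> \<in> space ?P. G i (restrict \<Phi> (B i))} = {\<Phi> \<in> space ?P. X i \<Phi> = 1}"
      by (auto simp: X_def)
    also have "\<dots> \<in> P.events" by measurable
    finally have A: "{\<Phi> \<in> space ?P. G i (restrict \<Phi> (B i))} \<in> P.events" .
    have "P.expectation (X i) = P.expectation (indicator {\<Phi> \<in> space ?P. G i (restrict \<Phi> (B i))})"
      by (rule Bochner_Integration.integral_cong) (auto simp: X_def)
    also have "\<dots> = measure ?P {\<Phi> \<in> space ?P. G i (restrict \<Phi> (B i))}"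
      using A by (simp add: Int_absorb2)
    finally show ?thesis using p[OF that] by simp
  qed
  interpret H: Hoeffding_ineq ?P I X "\<lambda>_. 0" "\<lambda>_. 1" "\<Sum>i\<in>I. P.expectation (X i)"
    by unfold_locales (auto simp: I indep X_def)
  have "measure ?P {\<Phi> \<in> space ?P. real (card I) * p + \<epsilon> \<le> real (card {i \<in> I. G i (restrict \<Phi> (B i))})}
      \<le> measure ?P {\<Phi> \<in> space ?P. (\<Sum>i\<in>I. P.expectation (X i)) + \<epsilon> \<le> (\<Sum>i\<in>I. X i \<Phi>)}"
  proof (rule P.finite_measure_mono)
    have "(\<Sum>i\<in>I. P.expectation (X i)) \<le> real (card I) * p"
      using sum_mono[OF E] by simp
    then show "{\<Phi> \<in> space ?P. real (card I) * p + \<epsilon> \<le> real (card {i \<in> I. G i (restrict \<Phi> (B i))})}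
        \<subseteq> {\<Phi> \<in> space ?P. (\<Sum>i\<in>I. P.expectation (X i)) + \<epsilon> \<le> (\<Sum>i\<in>I. X i \<Phi>)}"
      using I(1) by (auto simp: X_def of_bool_def sum.If_cases Int_def)
  qed measurable
  also have "\<dots> \<le> exp (- 2 * \<epsilon>\<^sup>2 / real (card I))"
    using H.Hoeffding_ineq_ge[OF \<epsilon>] I by (simp add: card_gt_0_iff)
  finally show ?thesis .
qed

lemma cinner_column_eq_sum:
  "cinner M x (\<lambda>j. \<Phi> (j, i)) = (\<Sum>k\<in>{..<M} \<times> {i}. x (fst k) * cnj (\<Phi> k))"
proof -
  have "{..<M} \<times> {i} = (\<lambda>j. (j, i)) ` {..<M}" by auto
  then show ?thesis
    by (simp add: cinner_def sum.reindex inj_on_def)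
qed

lemma cvnorm_sq_eq_column_sum:
  "(cvnorm M x)\<^sup>2 = (\<Sum>k\<in>{..<M} \<times> {i}. (cmod (x (fst k)))\<^sup>2)"
proof -
  have "{..<M} \<times> {i} = (\<lambda>j. (j, i)) ` {..<M}" by auto
  then show ?thesis
    by (simp add: cvnorm_def sum_nonneg sum.reindex inj_on_def)
qed

lemma cvnorm_pos: "\<exists>j<M. x j \<noteq> 0 \<Longrightarrow> cvnorm M x > 0"
  unfolding cvnorm_def by (auto intro!: sum_pos2)

lemma prob_gauss_measurement_gt:
  assumes "M > 0" "i < n" "T > 0" "cvnorm M x > 0"
  shows "measure (gauss_matrix M n)
           {\<Phi> \<in> space (gauss_matrix M n). T < (cmod (cinner M x (\<lambda>j. \<Phi> (j, i))))\<^sup>2}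
         \<le> 4 * exp (- real M * T / (2 * (cvnorm M x)\<^sup>2))"
  using prob_cmod_linear_PiM_cgauss_gt[of "1 / real M" "{..<M} \<times> {..<n}" "{..<M} \<times> {i}" T
      "\<lambda>k. x (fst k)"] assms
  by (auto simp: gauss_matrix_def cinner_column_eq_sum mult.commute[of T] simp flip: cvnorm_sq_eq_column_sum)

lemma prob_card_gauss_measurements_ge:
  assumes "M > 0" "n > 0" "T > 0" "cvnorm M x > 0" "\<epsilon> \<ge> 0"
  shows "measure (gauss_matrix M n)
           {\<Phi> \<in> space (gauss_matrix M n).
              real n * (4 * exp (- real M * T / (2 * (cvnorm M x)\<^sup>2))) + \<epsilon>
                \<le> real (card {i. i < n \<and> T < (cmod (cinner M x (\<lambda>j. \<Phi> (j, i))))\<^sup>2})}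
         \<le> exp (- 2 * \<epsilon>\<^sup>2 / real n)"
proof -
  define B where "B i = {..<M} \<times> {i}" for i :: nat
  define G where "G i \<psi> \<longleftrightarrow> T < (cmod (cinner M x (\<lambda>j. \<psi> (j, i))))\<^sup>2" for i :: nat and \<psi>
  have restrict_column: "G i (restrict \<Phi> (B i)) = G i \<Phi>" for i \<Phi>
    by (simp add: G_def B_def cinner_def)
  have "{\<psi> \<in> space (PiM (B i) (\<lambda>_. cgauss (1 / real M))). G i \<psi>}
      \<in> sets (PiM (B i) (\<lambda>_. cgauss (1 / real M)))" for i
    using measurable_linear_PiM_cgauss[of "B i" "B i" "\<lambda>k. x (fst k)"]
    unfolding G_def cinner_column_eq_sum B_def by measurable
  moreover have "{i \<in> {..<n}. G i (restrict \<Phi> (B i))} = {i. i < n \<and> T < (cmod (cinner M x (\<lambda>j. \<Phi> (j, i))))\<^sup>2}"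
    for \<Phi> unfolding restrict_column by (auto simp: G_def)
  ultimately show ?thesis
    using prob_card_block_events_ge[of "{..<M} \<times> {..<n}" "\<lambda>_. cgauss (1 / real M)" "{..<n}" B G
        "4 * exp (- real M * T / (2 * (cvnorm M x)\<^sup>2))" \<epsilon>]
      prob_gauss_measurement_gt[OF assms(1) _ assms(3,4)] assms prob_space_cgauss
    unfolding restrict_column by (auto simp: gauss_matrix_def disjoint_family_on_def B_def G_def)
qed

lemma card_gt_mult_sq_le_rvnorm_sq:
  assumes "T > 0"
  shows "real (card {i. i < n \<and> T < \<nu> i}) * T\<^sup>2 \<le> (rvnorm n \<nu>)\<^sup>2"
proof -
  have "real (card {i. i < n \<and> T < \<nu> i}) * T\<^sup>2 = (\<Sum>i | i < n \<and> T < \<nu> i. T\<^sup>2)"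
    by simp
  also have "\<dots> \<le> (\<Sum>i | i < n \<and> T < \<nu> i. (\<nu> i)\<^sup>2)"
    using assms by (intro sum_mono power_mono) auto
  also have "\<dots> \<le> (\<Sum>i<n. (\<nu> i)\<^sup>2)"
    by (intro sum_mono2) auto
  also have "\<dots> = (rvnorm n \<nu>)\<^sup>2"
    by (simp add: rvnorm_def sum_nonneg)
  finally show ?thesis .
qed

lemma card_noise_gt_le:
  assumes "C > 0" "M > 0" "cvnorm M x > 0"
    and "rvnorm n \<nu> / (cvnorm M x)\<^sup>2 \<le> C' / sqrt (real M)"
  shows "real (card {i. i < n \<and> C / real M * (cvnorm M x)\<^sup>2 < \<nu> i}) \<le> (C' / C)\<^sup>2 * real M"
proof -
  define X2 where "X2 = (cvnorm M x)\<^sup>2"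
  have X2: "X2 > 0" using assms(3) by (simp add: X2_def)
  have "0 \<le> rvnorm n \<nu>" by (simp add: rvnorm_def sum_nonneg)
  moreover have "rvnorm n \<nu> \<le> C' / sqrt (real M) * X2"
    using assms(4) X2 by (simp add: X2_def pos_divide_le_eq)
  ultimately have "(rvnorm n \<nu>)\<^sup>2 \<le> (C' / sqrt (real M) * X2)\<^sup>2"
    by (auto intro: power_mono)
  moreover have "(C' / sqrt (real M) * X2)\<^sup>2 = C'\<^sup>2 * (X2\<^sup>2 / real M)"
    using assms(2) by (simp add: power_mult_distrib power_divide)
  moreover have "(C / real M * X2)\<^sup>2 = C\<^sup>2 / real M * (X2\<^sup>2 / real M)"
    by (simp add: power_mult_distrib power_divide power2_eq_square)
  ultimately have "real (card {i. i < n \<and> C / real M * X2 < \<nu> i}) * (C\<^sup>2 / real M) * (X2\<^sup>2 / real M)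
      \<le> C'\<^sup>2 * (X2\<^sup>2 / real M)"
    using card_gt_mult_sq_le_rvnorm_sq[of "C / real M * X2" n \<nu>] assms(1,2) X2 by (simp add: mult.assoc)
  then have "real (card {i. i < n \<and> C / real M * X2 < \<nu> i}) * (C\<^sup>2 / real M) \<le> C'\<^sup>2"
    by (rule mult_right_le_imp_le) (use assms(2) X2 in simp)
  then show ?thesis
    using assms(1,2) by (simp add: X2_def power_divide field_simps)
qed

lemma card_sum_gt_le:
  fixes a b :: "nat \<Rightarrow> real"
  shows "card {i. i < n \<and> s + t < a i + b i} \<le> card {i. i < n \<and> s < a i} + card {i. i < n \<and> t < b i}"
proof -
  have "card {i. i < n \<and> s + t < a i + b i} \<le> card ({i. i < n \<and> s < a i} \<union> {i. i < n \<and> t < b i})"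
    by (intro card_mono) auto
  also have "\<dots> \<le> card {i. i < n \<and> s < a i} + card {i. i < n \<and> t < b i}"
    by (rule card_Un_le)
  finally show ?thesis .
qed

lemma real_card_lessThan_eq_sum:
  fixes n :: nat
  shows "real (card {i. i < n \<and> P i}) = (\<Sum>i<n. of_bool (P i))"
proof -
  have "{i. i < n \<and> P i} = {..<n} \<inter> {i. P i}" by auto
  then show ?thesis by simp
qed

lemma prob_space_gauss_matrix: "M > 0 \<Longrightarrow> prob_space (gauss_matrix M n)"
  unfolding gauss_matrix_def by (intro prob_space_PiM prob_space_cgauss) simp

lemma prob_card_noisy_gauss_measurements_lt:
  fixes C C' :: real
  assumes C: "C > 0" and M: "M > 0" and x: "cvnorm M x > 0"
    and noise: "rvnorm n \<nu> / (cvnorm M x)\<^sup>2 \<le> C' / sqrt (real M)"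
    and lnM: "1 \<le> ln (real M)" "(C' / C)\<^sup>2 \<le> ln (real M)"
    and n: "exp (C / 8) * real M * ln (real M) \<le> real n"
  shows "1 - exp (- 2 * exp (- C / 8) * real M) \<le> measure (gauss_matrix M n)
           {\<Phi> \<in> space (gauss_matrix M n).
              real (card {i. i < n \<and>
                 (cmod (cinner M x (\<lambda>j. \<Phi> (j, i))))\<^sup>2 + \<nu> i > 2 * C / real M * (cvnorm M x)\<^sup>2})
              < 2 * (3 * exp (- C / 8)) * real n}"
    (is "_ \<le> measure ?P ?good")
proof -
  define e where "e = exp (- C / 8)"
  define T where "T = C / real M * (cvnorm M x)\<^sup>2"
  have e: "e > 0" "4 * exp (- real M * T / (2 * (cvnorm M x)\<^sup>2)) \<le> 4 * e"
    using C M x by (simp_all add: e_def T_def)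
  have "real M * ln (real M) \<le> e * real n"
    using n by (simp add: e_def exp_minus field_simps)
  moreover have "real M * 1 \<le> real M * ln (real M)" "real M * (C' / C)\<^sup>2 \<le> real M * ln (real M)"
    using lnM by (intro mult_left_mono; simp)+
  ultimately have Mn: "real M \<le> e * real n" "real M * (C' / C)\<^sup>2 \<le> e * real n"
    by linarith+
  then have "n > 0" using M by (cases n) auto
  define S where "S \<Phi> = real (card {i. i < n \<and> T < (cmod (cinner M x (\<lambda>j. \<Phi> (j, i))))\<^sup>2})" for \<Phi>
  define bad where "bad = {\<Phi> \<in> space ?P. real n * (4 * exp (- real M * T / (2 * (cvnorm M x)\<^sup>2))) + e * real n \<le> S \<Phi>}"
  interpret P: prob_space ?P by (rule prob_space_gauss_matrix) fact
  have bad: "space ?P - ?good \<subseteq> bad"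
  proof
    fix \<Phi> assume "\<Phi> \<in> space ?P - ?good"
    then have \<Phi>: "\<Phi> \<in> space ?P" "\<Phi> \<notin> ?good" by auto
    have "2 * C / real M * (cvnorm M x)\<^sup>2 = T + T" by (simp add: T_def)
    with \<Phi> have "6 * e * real n
        \<le> real (card {i. i < n \<and> T + T < (cmod (cinner M x (\<lambda>j. \<Phi> (j, i))))\<^sup>2 + \<nu> i})"
      by (simp add: e_def)
    moreover have "\<dots> \<le> S \<Phi> + real (card {i. i < n \<and> T < \<nu> i})"
      unfolding S_def of_nat_add[symmetric] of_nat_le_iff by (rule card_sum_gt_le)
    moreover have "real (card {i. i < n \<and> T < \<nu> i}) \<le> e * real n"
      using card_noise_gt_le[OF C M x noise] Mn(2) by (simp add: T_def mult.commute)
    moreover have "real n * (4 * exp (- real M * T / (2 * (cvnorm M x)\<^sup>2))) \<le> real n * (4 * e)"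
      using e(2) by (rule mult_left_mono) simp
    moreover have "real n * (4 * e) = 4 * (e * real n)" "6 * e * real n = 6 * (e * real n)"
      by simp_all
    ultimately have "real n * (4 * exp (- real M * T / (2 * (cvnorm M x)\<^sup>2))) + e * real n \<le> S \<Phi>"
      by linarith
    with \<Phi>(1) show "\<Phi> \<in> bad" by (simp add: bad_def)
  qed
  have events: "bad \<in> P.events" "?good \<in> P.events"
  proof -
    have [measurable]: "(\<lambda>\<Phi>. cinner M x (\<lambda>j. \<Phi> (j, i))) \<in> borel_measurable ?P" if "i < n" for i
      unfolding gauss_matrix_def cinner_column_eq_sum using that
      by (intro measurable_linear_PiM_cgauss) auto
    show "bad \<in> P.events" "?good \<in> P.events"
      unfolding bad_def S_def real_card_lessThan_eq_sum by measurable
  qed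
  have "1 - measure ?P ?good = measure ?P (space ?P - ?good)"
    using events(2) by (rule P.prob_compl[symmetric])
  also have "\<dots> \<le> measure ?P bad"
    using bad events(1) by (rule P.finite_measure_mono)
  also have "measure ?P bad \<le> exp (- 2 * (e * real n)\<^sup>2 / real n)"
    unfolding bad_def S_def using M \<open>n > 0\<close> C x e
    by (intro prob_card_gauss_measurements_ge) (simp_all add: T_def)
  also have "- 2 * (e * real n)\<^sup>2 / real n = - 2 * e * (e * real n)"
    using \<open>n > 0\<close> by (simp add: power2_eq_square)
  also have "exp (- 2 * e * (e * real n)) \<le> exp (- 2 * e * real M)"
    using Mn(1) e(1) by simp
  finally show ?thesis by (simp add: e_def)
qed

theorem theorem6p11:
  fixes C C' :: real
  assumes "C > 0" and "C' > 0"
  shows "\<exists>c0 c1 :: real. \<exists>M0 :: nat. c0 > 0 \<and> c1 > 0 \<and>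
    (\<forall>M n (x :: nat \<Rightarrow> complex) (\<nu> :: nat \<Rightarrow> real).
       M \<ge> M0 \<and> real n \<ge> exp (C / 8) * real M * ln (real M) \<and>
       (\<exists>j<M. x j \<noteq> 0) \<and>
       rvnorm n \<nu> / (cvnorm M x)\<^sup>2 \<le> C' / sqrt (real M)
       \<longrightarrow> measure (gauss_matrix M n)
             {\<Phi> \<in> space (gauss_matrix M n).
                real (card {i. i < n \<and>
                   (cmod (cinner M x (\<lambda>j. \<Phi> (j, i))))\<^sup>2 + \<nu> i
                     > 2 * C / real M * (cvnorm M x)\<^sup>2})
                < 2 * (3 * exp (- C / 8)) * real n}
           \<ge> 1 - c0 * exp (- c1 * real M))"
proof (rule exI[of _ 1], rule exI[of _ "2 * exp (- C / 8)"],
    rule exI[of _ "nat \<lceil>exp ((C' / C)\<^sup>2 + 1)\<rceil>"], intro conjI allI impI)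
  fix M n and x :: "nat \<Rightarrow> complex" and \<nu> :: "nat \<Rightarrow> real"
  assume H: "nat \<lceil>exp ((C' / C)\<^sup>2 + 1)\<rceil> \<le> M \<and> exp (C / 8) * real M * ln (real M) \<le> real n \<and>
    (\<exists>j<M. x j \<noteq> 0) \<and> rvnorm n \<nu> / (cvnorm M x)\<^sup>2 \<le> C' / sqrt (real M)"
  then have M: "exp ((C' / C)\<^sup>2 + 1) \<le> real M"
    by linarith
  then have "M > 0"
    using exp_gt_zero[of "(C' / C)\<^sup>2 + 1"] by linarith
  with M have "(C' / C)\<^sup>2 + 1 \<le> ln (real M)"
    by (simp add: ln_ge_iff)
  then have lnM: "1 \<le> ln (real M)" "(C' / C)\<^sup>2 \<le> ln (real M)"
    using zero_le_power2[of "C' / C"] by linarith+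
  show "measure (gauss_matrix M n)
             {\<Phi> \<in> space (gauss_matrix M n).
                real (card {i. i < n \<and>
                   (cmod (cinner M x (\<lambda>j. \<Phi> (j, i))))\<^sup>2 + \<nu> i
                     > 2 * C / real M * (cvnorm M x)\<^sup>2})
                < 2 * (3 * exp (- C / 8)) * real n}
           \<ge> 1 - 1 * exp (- (2 * exp (- C / 8)) * real M)"
    using prob_card_noisy_gauss_measurements_lt[OF assms(1) \<open>M > 0\<close> cvnorm_pos _ lnM] H by simp
qed simp_all

end
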